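(* Fix $k\in\mathbb N$ and $s>0$. For every $\varepsilon>0$ there exists $\eta>0$ such that, for all sufficiently large $P$, all $R$ with $2\le R\le P^\eta$, all real $M\ge1$, all $Q$ with $1\le Q\le P^{k/2}$ and all integers $q$ with $1\le q\le Q$, one has \[ \int_{\mathfrak M_q(Q,P)}|f_q^\dagger(\alpha;P,M,R)|^s\,d\alpha\ll QM^sP^{\varepsilon-k}, \] with implied constant depending only on $\varepsilon,\eta,k,s$.
   Context: For real $P,R\ge1$, $\mathscr A(P,R)$ is the set of integers $n\in[1,P]$ all of whose prime divisors are at most $R$; $e(z)=e^{2\pi iz}$. For $q\in\mathbb N$, $u\mid q^\infty$ means every prime dividing $u$ divides $q$, and $\mathscr C_q(P,R)=\{n\in\mathscr A(P,R): n\mid q^\infty\}$. Define $f_q^\dagger(\alpha;P,M,R)=\sum_{v\in\mathscr A(M,R),\ (v,q)=1}\sum_{u\in\mathscr C_q(P/v,R)}e(\alpha(uv)^k)$. For $1\le q\le Q$, $\mathfrak M_q(Q,P)$ is the union over $0\le a\le q$ with $(a,q)=1$ of $\{\alpha\in[0,1):|q\alpha-a|\le QP^{-k}\}$. *)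

theory Defs
  imports "HOL-Analysis.Analysis" "HOL-Computational_Algebra.Primes"
begin

definition ee :: "real \<Rightarrow> complex" where
  "ee z = exp (2 * of_real pi * \<i> * of_real z)"

definition smooth_set :: "real \<Rightarrow> real \<Rightarrow> nat set" where
  "smooth_set P R = {n. 1 \<le> n \<and> real n \<le> P \<and> (\<forall>p. prime p \<and> p dvd n \<longrightarrow> real p \<le> R)}"

text \<open>C_q(P,R): elements of A(P,R) dividing q^infinity\<close>
definition Cq_set :: "nat \<Rightarrow> real \<Rightarrow> real \<Rightarrow> nat set" where
  "Cq_set q P R = {n \<in> smooth_set P R. \<forall>p. prime p \<and> p dvd n \<longrightarrow> p dvd q}"

definition f_dagger :: "nat \<Rightarrow> nat \<Rightarrow> real \<Rightarrow> real \<Rightarrow> real \<Rightarrow> real \<Rightarrow> complex" where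
  "f_dagger k q \<alpha> P M R =
     (\<Sum>v \<in> {v \<in> smooth_set M R. coprime v q}.
        \<Sum>u \<in> Cq_set q (P / real v) R. ee (\<alpha> * real (u * v) ^ k))"

definition major_arc :: "nat \<Rightarrow> nat \<Rightarrow> real \<Rightarrow> real \<Rightarrow> real set" where
  "major_arc k q Q P =
     (\<Union>a \<in> {a. a \<le> q \<and> coprime a q}.
        {\<alpha>. 0 \<le> \<alpha> \<and> \<alpha> < 1 \<and> \<bar>real q * \<alpha> - real a\<bar> \<le> Q * P powr (- real k)})"

end

theory Submission
  imports Defs
begin

text \<open>
  The estimate is the trivial one: bound the sum by its number of terms and the major arc
  by its measure. There are at most M choices of v. For fixed v, the u are numbers up to
  X = P/v built from primes dividing q; by Rankin's bound there are, for any d > 0, at most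
  X^d \<Prod>_{p | q} (1 - p^-d)^-1 of them, and this product is O_d(q^d) because
  only the boundedly many primes p < 2^(1/d) contribute a factor larger than p^d.
  With q \<le> P^(k/2) this gives |f| = O_d(M P^(d(1+k/2))), and the major arc is covered
  by q + 1 intervals of length 2QP^-k/q.
\<close>

definition S_numbers_upto :: "nat set \<Rightarrow> real \<Rightarrow> nat set" where
  "S_numbers_upto S P = {u. 1 \<le> u \<and> real u \<le> P \<and> (\<forall>p. prime p \<and> p dvd u \<longrightarrow> p \<in> S)}"

lemma finite_S_numbers_upto: "finite (S_numbers_upto S P)"
  by (rule finite_subset[of _ "{..nat \<lceil>P\<rceil>}"])
     (auto simp: S_numbers_upto_def le_nat_iff le_ceiling_iff)

lemma S_numbers_upto_empty_subset: "S_numbers_upto {} P \<subseteq> {1}"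
  by (auto simp: S_numbers_upto_def) (metis One_nat_def prime_factor_nat)

text \<open>Split off the exponent a of p; it satisfies a < p^a \<le> P.\<close>
lemma S_numbers_upto_insert_subset:
  assumes "prime p"
  shows "S_numbers_upto (insert p S) P \<subseteq>
           (\<Union>a<nat \<lceil>P\<rceil> + 1. (\<lambda>u. p ^ a * u) ` S_numbers_upto S (P / real p ^ a))"
proof
  fix u assume u: "u \<in> S_numbers_upto (insert p S) P"
  hence u1: "u \<ge> 1" and uP: "real u \<le> P" by (auto simp: S_numbers_upto_def)
  obtain y where y: "u = p ^ multiplicity p u * y" "\<not> p dvd y"
    by (rule multiplicity_decompose'[of u p]) (use u1 assms in auto)
  define a where "a = multiplicity p u"
  have "y \<ge> 1" using y(1) u1 by (cases "y = 0") auto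
  have "a < 2 ^ a" by simp
  also have "\<dots> \<le> p ^ a" using assms by (simp add: power_mono prime_ge_2_nat)
  also have "\<dots> \<le> p ^ a * y" using \<open>y \<ge> 1\<close> by simp
  also have "\<dots> = u" using y(1) by (simp add: a_def)
  finally have "real a < P" using uP by linarith
  hence "a < nat \<lceil>P\<rceil> + 1" by linarith
  moreover have "real y * real p ^ a \<le> P"
    using uP y(1) unfolding a_def by (metis mult.commute of_nat_mult of_nat_power)
  hence "real y \<le> P / real p ^ a"
    using assms by (simp add: pos_le_divide_eq prime_gt_0_nat)
  moreover have "prime r \<and> r dvd y \<longrightarrow> r \<in> S" for r
    using u y by (auto simp: S_numbers_upto_def) (metis dvd_mult)
  ultimately have "y \<in> S_numbers_upto S (P / real p ^ a)" "a < nat \<lceil>P\<rceil> + 1"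
    using \<open>y \<ge> 1\<close> by (auto simp: S_numbers_upto_def)
  thus "u \<in> (\<Union>a<nat \<lceil>P\<rceil> + 1. (\<lambda>u. p ^ a * u) ` S_numbers_upto S (P / real p ^ a))"
    using y(1) by (auto simp: a_def)
qed

lemma sum_power_le_inverse_one_minus:
  fixes x :: real
  assumes "0 \<le> x" "x < 1"
  shows "(\<Sum>a<N. x ^ a) \<le> 1 / (1 - x)"
proof -
  have "(\<Sum>a<N. x ^ a) = (1 - x ^ N) / (1 - x)" using assms by (simp add: sum_gp_strict)
  also have "\<dots> \<le> 1 / (1 - x)" using assms by (simp add: divide_right_mono)
  finally show ?thesis .
qed

lemma prime_powr_neg_less_one: "prime p \<Longrightarrow> \<delta> > 0 \<Longrightarrow> real p powr - \<delta> < 1"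
  using prime_gt_1_nat[of p] by (intro powr_less_one) auto

text \<open>Rankin's bound, proved by induction on S: the numbers with p-adic valuation a
  contribute at most (P/p^a)^d = P^d (p^-d)^a times the product over S.\<close>
lemma card_S_numbers_upto_le:
  assumes "finite S" "\<forall>p\<in>S. prime p" "\<delta> > 0" "P > 0"
  shows "real (card (S_numbers_upto S P)) \<le> P powr \<delta> * (\<Prod>p\<in>S. 1 / (1 - real p powr - \<delta>))"
  using assms
proof (induction S arbitrary: P rule: finite_induct)
  case empty
  have "card (S_numbers_upto {} P) \<le> 1"
    using card_mono[OF _ S_numbers_upto_empty_subset] by simp
  moreover have "S_numbers_upto {} P = {}" if "P < 1"
    using that by (auto simp: S_numbers_upto_def)
  moreover have "1 \<le> P powr \<delta>" if "P \<ge> 1"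
    using that empty.prems by (simp add: ge_one_powr_ge_zero)
  ultimately show ?case by (cases "P < 1") (auto simp: le_trans[OF of_nat_le_iff[THEN iffD2]])
next
  case (insert p S)
  define x where "x = real p powr - \<delta>"
  define G where "G = (\<Prod>p\<in>S. 1 / (1 - real p powr - \<delta>))"
  have p: "prime p" using insert.prems by simp
  have x: "0 \<le> x" "x < 1" using prime_powr_neg_less_one[OF p insert.prems(2)] by (auto simp: x_def)
  have "G \<ge> 0"
    unfolding G_def using insert.prems by (intro prod_nonneg) (simp add: prime_powr_neg_less_one less_imp_le)
  have rescale: "(P / real p ^ a) powr \<delta> = P powr \<delta> * x ^ a" for a
    using insert.prems p by (simp add: powr_divide x_def powr_powr powr_minus_divide
        prime_gt_0_nat flip: powr_realpow powr_power)
  have "card (S_numbers_upto (insert p S) P)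
      \<le> (\<Sum>a<nat \<lceil>P\<rceil> + 1. card ((\<lambda>u. p ^ a * u) ` S_numbers_upto S (P / real p ^ a)))"
    by (rule order_trans[OF card_mono[OF _ S_numbers_upto_insert_subset[OF p]] card_UN_le])
       (simp_all add: finite_S_numbers_upto)
  also have "\<dots> \<le> (\<Sum>a<nat \<lceil>P\<rceil> + 1. card (S_numbers_upto S (P / real p ^ a)))"
    by (intro sum_mono card_image_le finite_S_numbers_upto)
  finally have "real (card (S_numbers_upto (insert p S) P))
      \<le> (\<Sum>a<nat \<lceil>P\<rceil> + 1. real (card (S_numbers_upto S (P / real p ^ a))))"
    by (metis of_nat_le_iff of_nat_sum)
  also have "\<dots> \<le> (\<Sum>a<nat \<lceil>P\<rceil> + 1. (P / real p ^ a) powr \<delta> * G)"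
    using insert.prems p unfolding G_def
    by (intro sum_mono insert.IH) (auto simp: prime_gt_0_nat)
  also have "\<dots> = (\<Sum>a<nat \<lceil>P\<rceil> + 1. P powr \<delta> * G * x ^ a)"
    by (simp add: rescale mult_ac)
  also have "\<dots> = P powr \<delta> * G * (\<Sum>a<nat \<lceil>P\<rceil> + 1. x ^ a)"
    by (rule sum_distrib_left[symmetric])
  also have "\<dots> \<le> P powr \<delta> * G * (1 / (1 - x))"
    using \<open>G \<ge> 0\<close> x by (intro mult_left_mono sum_power_le_inverse_one_minus) auto
  also have "\<dots> = P powr \<delta> * (\<Prod>p\<in>insert p S. 1 / (1 - real p powr - \<delta>))"
    using insert.hyps by (simp add: G_def x_def)
  finally show ?case .
qed

lemma rankin_factor_le:
  assumes "prime p" "\<delta> > 0"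
  shows "1 / (1 - real p powr - \<delta>) \<le> 1 / (1 - 2 powr - \<delta>) * real p powr \<delta>"
proof -
  have "2 powr - \<delta> < (1::real)" using assms(2) by (intro powr_less_one) auto
  moreover have "real p powr - \<delta> \<le> 2 powr - \<delta>"
    using assms prime_ge_2_nat[of p] by (intro powr_mono2') auto
  ultimately have "1 / (1 - real p powr - \<delta>) \<le> 1 / (1 - 2 powr - \<delta>)"
    by (intro divide_left_mono) auto
  also have "\<dots> \<le> 1 / (1 - 2 powr - \<delta>) * real p powr \<delta>"
    using \<open>2 powr - \<delta> < 1\<close> assms prime_ge_1_nat[of p]
    by (intro mult_le_cancel_left1[THEN iffD2] impI) (simp add: ge_one_powr_ge_zero)
  finally show ?thesis .
qed

lemma rankin_factor_le_large:
  fixes p \<delta> :: real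
  assumes "2 powr (1 / \<delta>) \<le> p" "\<delta> > 0"
  shows "1 / (1 - p powr - \<delta>) \<le> p powr \<delta>"
proof -
  have "2 = (2 powr (1 / \<delta>)) powr \<delta>" using assms by (simp add: powr_powr)
  also have "\<dots> \<le> p powr \<delta>" using assms by (intro powr_mono2) auto
  finally have "p powr \<delta> \<ge> 2" .
  moreover have "1 / (1 - 1 / y) \<le> y" if "y \<ge> 2" for y :: real
    using that by (simp add: field_simps)
  ultimately show ?thesis by (simp add: powr_minus_divide)
qed

lemma prod_prime_factors_le:
  assumes "q \<noteq> (0::nat)"
  shows "(\<Prod>p\<in>prime_factors q. real p) \<le> real q"
proof -
  have "(\<Prod>p\<in>prime_factors q. p) dvd (\<Prod>p\<in>prime_factors q. p ^ multiplicity p q)"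
    by (intro prod_dvd_prod dvd_power) (auto simp: prime_factors_multiplicity)
  also have "\<dots> = q" using prod_prime_factors[OF assms] by simp
  finally have "(\<Prod>p\<in>prime_factors q. p) \<le> q"
    using assms dvd_imp_le by blast
  hence "real (\<Prod>p\<in>prime_factors q. p) \<le> real q" by (rule of_nat_mono)
  thus ?thesis by simp
qed

text \<open>Only the fewer than 2^(1/d) primes p < 2^(1/d) have Rankin factor exceeding p^d.\<close>
definition rankin_const :: "real \<Rightarrow> real" where
  "rankin_const \<delta> = (1 / (1 - 2 powr - \<delta>)) ^ nat \<lceil>2 powr (1 / \<delta>)\<rceil>"

lemma rankin_const_nonneg: "\<delta> > 0 \<Longrightarrow> rankin_const \<delta> \<ge> 0"
  unfolding rankin_const_def using powr_less_one[of 2 "- \<delta>"] by simp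

lemma prod_rankin_factors_le:
  assumes "q \<noteq> 0" "\<delta> > 0"
  shows "(\<Prod>p\<in>prime_factors q. 1 / (1 - real p powr - \<delta>)) \<le> rankin_const \<delta> * real q powr \<delta>"
proof -
  define c where "c = 1 / (1 - 2 powr - \<delta>)"
  define X where "X = 2 powr (1 / \<delta>)"
  have "c \<ge> 1" unfolding c_def using powr_less_one[of 2 "- \<delta>"] assms(2)
    by (simp add: le_divide_eq)
  have "(\<Prod>p\<in>prime_factors q. 1 / (1 - real p powr - \<delta>))
      \<le> (\<Prod>p\<in>prime_factors q. (if real p < X then c else 1) * real p powr \<delta>)"
  proof (rule prod_mono)
    fix p assume "p \<in> prime_factors q"
    hence "prime p" by auto
    thus "0 \<le> 1 / (1 - real p powr - \<delta>) \<and>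
        1 / (1 - real p powr - \<delta>) \<le> (if real p < X then c else 1) * real p powr \<delta>"
      using assms(2) prime_powr_neg_less_one[of p \<delta>] rankin_factor_le[of p \<delta>]
        rankin_factor_le_large[of \<delta> p] unfolding c_def X_def by (simp add: not_less)
  qed
  also have "\<dots> = c ^ card {p \<in> prime_factors q. real p < X} * (\<Prod>p\<in>prime_factors q. real p) powr \<delta>"
    unfolding prod.distrib by (simp add: prod_powr_distrib prod.If_cases Int_def)
  also have "\<dots> \<le> c ^ nat \<lceil>X\<rceil> * real q powr \<delta>"
  proof (rule mult_mono)
    have "{p \<in> prime_factors q. real p < X} \<subseteq> {..<nat \<lceil>X\<rceil>}"
      by (auto simp: less_ceiling_iff zless_nat_eq_int_zless)
    hence "card {p \<in> prime_factors q. real p < X} \<le> nat \<lceil>X\<rceil>"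
      using card_mono[of "{..<nat \<lceil>X\<rceil>}"] by simp
    thus "c ^ card {p \<in> prime_factors q. real p < X} \<le> c ^ nat \<lceil>X\<rceil>"
      using \<open>c \<ge> 1\<close> by (rule power_increasing)
    show "(\<Prod>p\<in>prime_factors q. real p) powr \<delta> \<le> real q powr \<delta>"
      using assms by (intro powr_mono2 prod_prime_factors_le prod_nonneg) auto
  qed (use \<open>c \<ge> 1\<close> in auto)
  finally show ?thesis by (simp add: rankin_const_def c_def X_def)
qed

lemma card_Cq_set_le:
  assumes "q \<noteq> 0" "\<delta> > 0" "P > 0"
  shows "real (card (Cq_set q P R)) \<le> rankin_const \<delta> * P powr \<delta> * real q powr \<delta>"
proof -
  have "Cq_set q P R \<subseteq> S_numbers_upto (prime_factors q) P"
    using assms(1) by (auto simp: Cq_set_def smooth_set_def S_numbers_upto_def in_prime_factors_iff)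
  hence "real (card (Cq_set q P R)) \<le> real (card (S_numbers_upto (prime_factors q) P))"
    by (intro of_nat_mono card_mono finite_S_numbers_upto)
  also have "\<dots> \<le> P powr \<delta> * (\<Prod>p\<in>prime_factors q. 1 / (1 - real p powr - \<delta>))"
    by (rule card_S_numbers_upto_le) (use assms in auto)
  also have "\<dots> \<le> P powr \<delta> * (rankin_const \<delta> * real q powr \<delta>)"
    using prod_rankin_factors_le[OF assms(1,2)] by (intro mult_left_mono) auto
  finally show ?thesis by (simp add: mult_ac)
qed

lemma finite_smooth_set: "finite (smooth_set M R)"
  by (rule finite_subset[of _ "{..nat \<lceil>M\<rceil>}"]) (auto simp: smooth_set_def le_nat_iff le_ceiling_iff)

lemma card_smooth_set_le:
  assumes "M \<ge> 0"
  shows "real (card (smooth_set M R)) \<le> M"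
proof -
  have "smooth_set M R \<subseteq> {1..nat \<lfloor>M\<rfloor>}"
    by (auto simp: smooth_set_def le_nat_iff le_floor_iff)
  hence "card (smooth_set M R) \<le> nat \<lfloor>M\<rfloor>"
    using card_mono[of "{1..nat \<lfloor>M\<rfloor>}"] by simp
  thus ?thesis using assms by linarith
qed

lemma norm_ee [simp]: "norm (ee z) = 1"
proof -
  have "ee z = exp (\<i> * complex_of_real (2 * pi * z))" unfolding ee_def by (simp add: mult_ac)
  thus ?thesis by simp
qed

lemma norm_f_dagger_le:
  assumes "q \<noteq> 0" "\<delta> > 0" "P > 0" "M \<ge> 0"
  shows "norm (f_dagger k q \<alpha> P M R) \<le> M * rankin_const \<delta> * P powr \<delta> * real q powr \<delta>"
proof -
  define V where "V = {v \<in> smooth_set M R. coprime v q}"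
  define B where "B = rankin_const \<delta> * P powr \<delta> * real q powr \<delta>"
  have "norm (\<Sum>u \<in> Cq_set q (P / real v) R. ee (\<alpha> * real (u * v) ^ k)) \<le> B" if "v \<in> V" for v
  proof -
    have "v \<ge> 1" using that by (simp add: V_def smooth_set_def)
    have "norm (\<Sum>u \<in> Cq_set q (P / real v) R. ee (\<alpha> * real (u * v) ^ k))
        \<le> (\<Sum>u \<in> Cq_set q (P / real v) R. norm (ee (\<alpha> * real (u * v) ^ k)))"
      by (rule norm_sum)
    also have "\<dots> = real (card (Cq_set q (P / real v) R))" by simp
    also have "\<dots> \<le> rankin_const \<delta> * (P / real v) powr \<delta> * real q powr \<delta>"
      using assms \<open>v \<ge> 1\<close> by (intro card_Cq_set_le) auto
    also have "\<dots> \<le> B"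
      unfolding B_def using assms \<open>v \<ge> 1\<close> rankin_const_nonneg[OF assms(2)]
      by (intro mult_right_mono mult_left_mono powr_mono2) (auto simp: divide_le_eq)
    finally show ?thesis .
  qed
  hence "norm (f_dagger k q \<alpha> P M R) \<le> (\<Sum>v\<in>V. B)"
    unfolding f_dagger_def V_def[symmetric] by (intro order_trans[OF norm_sum sum_mono])
  also have "\<dots> \<le> M * B"
  proof -
    have "card V \<le> card (smooth_set M R)"
      unfolding V_def by (intro card_mono finite_smooth_set) auto
    hence "real (card V) \<le> M"
      using card_smooth_set_le[OF assms(4), of R] by linarith
    moreover have "B \<ge> 0" unfolding B_def using rankin_const_nonneg[OF assms(2)] by simp
    ultimately show ?thesis by (simp add: mult_right_mono)
  qed
  finally show ?thesis by (simp add: B_def mult_ac)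
qed

lemma indicator_le_sum_indicator:
  assumes "finite F" "A \<subseteq> (\<Union>a\<in>F. I a)"
  shows "indicator A x \<le> (\<Sum>a\<in>F. indicator (I a) x :: real)"
proof (cases "x \<in> A")
  case True
  then obtain a where "a \<in> F" "x \<in> I a" using assms(2) by blast
  hence "indicator (I a) x \<le> (\<Sum>a\<in>F. indicator (I a) x :: real)"
    using assms(1) by (intro member_le_sum) auto
  thus ?thesis using True \<open>x \<in> I a\<close> by simp
qed (simp add: sum_nonneg)

text \<open>No measurability of g or A is needed: if the integrand is not integrable, the
  integral is 0 by convention.\<close>
lemma set_integral_le_of_subset_intervals:
  fixes g :: "real \<Rightarrow> real"
  assumes "finite F" "A \<subseteq> (\<Union>a\<in>F. {c a - r .. c a + r})" "r \<ge> 0"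
    and "\<And>x. 0 \<le> g x" "\<And>x. g x \<le> B"
  shows "(LINT x:A|lborel. g x) \<le> B * card F * (2 * r)"
proof (cases "integrable lborel (\<lambda>x. indicator A x *\<^sub>R g x)")
  case True
  define I where "I a = {c a - r .. c a + r}" for a
  have int_I: "integrable lborel (indicator (I a) :: real \<Rightarrow> real)" for a
    unfolding I_def by (rule integrable_real_indicator) (auto simp: emeasure_lborel_Icc_eq)
  have "B \<ge> 0" using assms(4,5) order_trans by blast
  have "(LINT x:A|lborel. g x) = (\<integral>x. indicator A x * g x \<partial>lborel)"
    by (simp add: set_lebesgue_integral_def)
  also have "\<dots> \<le> (\<integral>x. B * (\<Sum>a\<in>F. indicator (I a) x) \<partial>lborel)"
  proof (rule integral_mono)
    show "integrable lborel (\<lambda>x. indicator A x * g x)" using True by simp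
    show "integrable lborel (\<lambda>x. B * (\<Sum>a\<in>F. indicator (I a) x))" using int_I by simp
    fix x
    have "indicator A x * g x \<le> indicator A x * B" using assms(5) by (simp add: indicator_def)
    also have "\<dots> \<le> (\<Sum>a\<in>F. indicator (I a) x) * B"
      using assms(1,2) \<open>B \<ge> 0\<close> unfolding I_def by (intro mult_right_mono indicator_le_sum_indicator)
    finally show "indicator A x * g x \<le> B * (\<Sum>a\<in>F. indicator (I a) x)" by (simp add: mult.commute)
  qed
  also have "\<dots> = B * card F * (2 * r)"
    using int_I assms(3) by (simp add: integral_sum I_def)
  finally show ?thesis .
next
  case False
  hence "(LINT x:A|lborel. g x) = 0"
    by (simp add: set_lebesgue_integral_def not_integrable_integral_eq)
  moreover have "B \<ge> 0" using assms(4,5) order_trans by blast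
  ultimately show ?thesis using assms(3) by simp
qed

lemma major_arc_subset_intervals:
  assumes "q \<noteq> 0"
  shows "major_arc k q Q P \<subseteq>
    (\<Union>a\<le>q. {real a / q - Q * P powr (- real k) / q .. real a / q + Q * P powr (- real k) / q})"
proof
  fix \<alpha> assume "\<alpha> \<in> major_arc k q Q P"
  then obtain a where a: "a \<le> q" "\<bar>real q * \<alpha> - real a\<bar> \<le> Q * P powr (- real k)"
    unfolding major_arc_def by auto
  have "\<bar>\<alpha> - real a / q\<bar> = \<bar>real q * \<alpha> - real a\<bar> / q"
    using assms by (simp add: field_simps abs_div_pos[symmetric])
  also have "\<dots> \<le> Q * P powr (- real k) / q" using a(2) by (simp add: divide_right_mono)
  finally show "\<alpha> \<in> (\<Union>a\<le>q. {real a / q - Q * P powr (- real k) / q .. real a / q + Q * P powr (- real k) / q})"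
    using a(1) by (intro UN_I[of a]) (auto simp: abs_le_iff)
qed

lemma set_integral_major_arc_le:
  fixes g :: "real \<Rightarrow> real"
  assumes "q \<noteq> 0" "Q \<ge> 0" "\<And>x. 0 \<le> g x" "\<And>x. g x \<le> B"
  shows "(LINT \<alpha>:major_arc k q Q P|lborel. g \<alpha>) \<le> 4 * B * Q * P powr (- real k)"
proof -
  have "B \<ge> 0" using assms(3,4) order_trans by blast
  have "(LINT \<alpha>:major_arc k q Q P|lborel. g \<alpha>) \<le> B * card {..q} * (2 * (Q * P powr (- real k) / q))"
    by (rule set_integral_le_of_subset_intervals[OF _ major_arc_subset_intervals]) (use assms in auto)
  also have "\<dots> = B * (2 * ((q + 1) / q)) * (Q * P powr (- real k))" by simp
  also have "\<dots> \<le> B * (2 * 2) * (Q * P powr (- real k))"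
    using assms(1,2) \<open>B \<ge> 0\<close> by (intro mult_right_mono mult_left_mono) (auto simp: field_simps)
  finally show ?thesis by (simp add: mult_ac)
qed

lemma norm_f_dagger_powr_le:
  assumes "q \<noteq> 0" "real q \<le> P powr (real k / 2)" "\<delta> > 0" "P > 0" "M \<ge> 0" "s \<ge> 0"
  shows "norm (f_dagger k q \<alpha> P M R) powr s
           \<le> M powr s * rankin_const \<delta> powr s * P powr (\<delta> * (1 + real k / 2) * s)"
proof -
  have "norm (f_dagger k q \<alpha> P M R) \<le> M * rankin_const \<delta> * P powr \<delta> * real q powr \<delta>"
    using assms by (intro norm_f_dagger_le) auto
  also have "\<dots> \<le> M * rankin_const \<delta> * P powr \<delta> * (P powr (real k / 2)) powr \<delta>"
    using assms rankin_const_nonneg[of \<delta>] by (intro mult_left_mono powr_mono2) auto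
  also have "\<dots> = M * rankin_const \<delta> * P powr (\<delta> * (1 + real k / 2))"
    by (simp add: powr_powr powr_add[symmetric] algebra_simps)
  finally have "norm (f_dagger k q \<alpha> P M R) powr s
      \<le> (M * rankin_const \<delta> * P powr (\<delta> * (1 + real k / 2))) powr s"
    using assms by (intro powr_mono2) auto
  thus ?thesis using assms rankin_const_nonneg[of \<delta>] by (simp add: powr_mult powr_powr)
qed

theorem lemma3p2:
  fixes k :: nat and s :: real
  assumes "k \<ge> 1" and "s > 0"
  shows "\<forall>\<epsilon>>0. \<exists>\<eta>>0. \<exists>C P\<^sub>0. \<forall>P \<ge> P\<^sub>0. \<forall>R M Q. \<forall>q::nat.
           2 \<le> R \<and> R \<le> P powr \<eta> \<and> 1 \<le> M \<and> 1 \<le> Q \<and> Q \<le> P powr (real k / 2)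
           \<and> 1 \<le> q \<and> real q \<le> Q \<longrightarrow>
           (LINT \<alpha>:major_arc k q Q P|lborel. norm (f_dagger k q \<alpha> P M R) powr s)
             \<le> C * Q * M powr s * P powr (\<epsilon> - real k)"
proof (intro allI impI)
  fix \<epsilon> :: real assume "\<epsilon> > 0"
  define \<delta> where "\<delta> = \<epsilon> / (s * (1 + real k / 2))"
  have "s * (1 + real k / 2) > 0" using assms(2) by (simp add: add_pos_nonneg)
  hence "\<delta> > 0" and \<delta>_exponent: "\<delta> * (1 + real k / 2) * s = \<epsilon>"
    using \<open>\<epsilon> > 0\<close> assms(2) by (simp_all add: \<delta>_def)
  define C where "C = 4 * rankin_const \<delta> powr s"
  have "(LINT \<alpha>:major_arc k q Q P|lborel. norm (f_dagger k q \<alpha> P M R) powr s)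
          \<le> C * Q * M powr s * P powr (\<epsilon> - real k)"
    if "P \<ge> 1" "1 \<le> M" "1 \<le> Q" "Q \<le> P powr (real k / 2)" "1 \<le> q" "real q \<le> Q"
    for P R M Q and q :: nat
  proof -
    have "norm (f_dagger k q \<alpha> P M R) powr s \<le> M powr s * rankin_const \<delta> powr s * P powr \<epsilon>" for \<alpha>
      using norm_f_dagger_powr_le[of q P k \<delta> M s] that \<open>\<delta> > 0\<close> assms(2)
      unfolding \<delta>_exponent by auto
    hence "(LINT \<alpha>:major_arc k q Q P|lborel. norm (f_dagger k q \<alpha> P M R) powr s)
          \<le> 4 * (M powr s * rankin_const \<delta> powr s * P powr \<epsilon>) * Q * P powr (- real k)"
      using that by (intro set_integral_major_arc_le) auto
    also have "\<dots> = C * Q * M powr s * P powr (\<epsilon> - real k)"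
      by (simp add: C_def powr_diff powr_minus_divide)
    finally show ?thesis .
  qed
  thus "\<exists>\<eta>>0. \<exists>C P\<^sub>0. \<forall>P \<ge> P\<^sub>0. \<forall>R M Q. \<forall>q::nat.
           2 \<le> R \<and> R \<le> P powr \<eta> \<and> 1 \<le> M \<and> 1 \<le> Q \<and> Q \<le> P powr (real k / 2)
           \<and> 1 \<le> q \<and> real q \<le> Q \<longrightarrow>
           (LINT \<alpha>:major_arc k q Q P|lborel. norm (f_dagger k q \<alpha> P M R) powr s)
             \<le> C * Q * M powr s * P powr (\<epsilon> - real k)"
    by (intro exI[of _ 1] conjI exI[of _ C]) auto
qed

end
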